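(* Let $d$ be a positive integer and $n=2^d$. Let $G=\mathrm{Circ}(a_0,\ldots,a_{n-1})$ be a Hermitian circulant with universal perfect state transfer. Then $a_j\neq 0$ for all $j=1,\ldots,n-1$.
   Context: $\mathrm{Circ}(a_0,\ldots,a_{n-1})$ denotes the $n\times n$ matrix $C$ with $C_{j,k}=a_{k-j}$ (indices mod $n$). A graph with Hermitian adjacency matrix $A$ has universal perfect state transfer if for every pair of vertices $v,w$ there is $t>0$ with $|\langle w|e^{-\mathtt{i} At}|v\rangle|=1$. *)

theory Defs
  imports "HOL-Analysis.Analysis"
begin

text \<open>n x n complex matrices are represented as functions nat => nat => complex,
  only entries with indices below n being relevant; vertices are 0..n-1.\<close>

definition circ :: "nat \<Rightarrow> (nat \<Rightarrow> complex) \<Rightarrow> nat \<Rightarrow> nat \<Rightarrow> complex" where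
  "circ n a j k = a ((k + n - j) mod n)"

definition hermitian_mat :: "nat \<Rightarrow> (nat \<Rightarrow> nat \<Rightarrow> complex) \<Rightarrow> bool" where
  "hermitian_mat n A \<longleftrightarrow> (\<forall>j<n. \<forall>k<n. A k j = cnj (A j k))"

definition mat_mult :: "nat \<Rightarrow> (nat \<Rightarrow> nat \<Rightarrow> complex) \<Rightarrow> (nat \<Rightarrow> nat \<Rightarrow> complex)
    \<Rightarrow> nat \<Rightarrow> nat \<Rightarrow> complex" where
  "mat_mult n A B j k = (\<Sum>l<n. A j l * B l k)"

fun mat_pow :: "nat \<Rightarrow> (nat \<Rightarrow> nat \<Rightarrow> complex) \<Rightarrow> nat \<Rightarrow> nat \<Rightarrow> nat \<Rightarrow> complex" where
  "mat_pow n A 0 = (\<lambda>j k. if j = k then 1 else 0)"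
| "mat_pow n A (Suc m) = mat_mult n A (mat_pow n A m)"

definition mat_exp :: "nat \<Rightarrow> (nat \<Rightarrow> nat \<Rightarrow> complex) \<Rightarrow> nat \<Rightarrow> nat \<Rightarrow> complex" where
  "mat_exp n A j k = (\<Sum>m. mat_pow n A m j k / of_nat (fact m))"

definition transition :: "nat \<Rightarrow> (nat \<Rightarrow> nat \<Rightarrow> complex) \<Rightarrow> real \<Rightarrow> nat \<Rightarrow> nat \<Rightarrow> complex" where
  "transition n A t = mat_exp n (\<lambda>j k. - (\<i> * of_real t) * A j k)"

definition universal_pst :: "nat \<Rightarrow> (nat \<Rightarrow> nat \<Rightarrow> complex) \<Rightarrow> bool" where
  "universal_pst n A \<longleftrightarrow>
     (\<forall>v<n. \<forall>w<n. v \<noteq> w \<longrightarrow> (\<exists>t>0. cmod (transition n A t w v) = 1))"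

end

theory Submission
  imports Defs "Jordan_Normal_Form.Determinant" "HOL-Library.Z2"
begin

text \<open>The circulant has eigenvalues \<open>\<lambda>\<^sub>k = \<Sum>\<^sub>p a\<^sub>p \<omega>^(-k p)\<close>, \<open>\<omega> = e^(2\<pi>\<i>/n)\<close>, which are real
  since the matrix is Hermitian, and \<open>U(t)\<^sub>0\<^sub>1 = (1/n) \<Sum>\<^sub>k e^(-\<i> t \<lambda>\<^sub>k) \<omega>^k\<close>. Perfect state
  transfer from \<open>1\<close> to \<open>0\<close> forces these \<open>n\<close> unimodular terms to coincide, i.e.
  \<open>\<lambda>\<^sub>k = \<lambda>\<^sub>0 + 2\<pi>/(t n) (k - n m\<^sub>k)\<close> with integers \<open>m\<^sub>k\<close>. If \<open>a\<^sub>j = 0\<close>, Fourier inversion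
  gives \<open>\<Sum>\<^sub>k (k - n m\<^sub>k) \<zeta>^k = 0\<close> for \<open>\<zeta> = \<omega>^j\<close>. As \<open>n\<close> is a power of \<open>2\<close>, \<open>\<zeta>^M = -1\<close> for a
  power of two \<open>M\<close> dividing \<open>n/2\<close>; folding the sum modulo \<open>\<zeta>^M = -1\<close> leaves a relation
  \<open>\<Sum>\<^sub>r\<^sub><\<^sub>M c\<^sub>r \<zeta>^r = 0\<close> with all \<open>c\<^sub>r\<close> odd, which a 2-adic argument in \<open>\<int>[\<zeta>]\<close> rules out.\<close>

definition int_powers_span :: "'a::comm_ring_1 \<Rightarrow> nat \<Rightarrow> 'a set" where
  "int_powers_span \<eta> M = range (\<lambda>c::nat \<Rightarrow> int. \<Sum>r<M. of_int (c r) * \<eta>^r)"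

lemma int_powers_spanI: "(\<Sum>r<M. of_int (c r) * \<eta>^r) \<in> int_powers_span \<eta> M"
  unfolding int_powers_span_def by blast

lemma int_powers_spanE:
  assumes "z \<in> int_powers_span \<eta> M"
  obtains c where "z = (\<Sum>r<M. of_int (c r) * \<eta>^r)"
  using assms unfolding int_powers_span_def by blast

lemma int_powers_span_add:
  assumes "z \<in> int_powers_span \<eta> M" "w \<in> int_powers_span \<eta> M"
  shows "z + w \<in> int_powers_span \<eta> M"
proof -
  obtain c c' where "z = (\<Sum>r<M. of_int (c r) * \<eta>^r)" "w = (\<Sum>r<M. of_int (c' r) * \<eta>^r)"
    using assms by (metis int_powers_spanE)
  then have "z + w = (\<Sum>r<M. of_int (c r + c' r) * \<eta>^r)"
    by (simp add: sum.distrib distrib_right)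
  then show ?thesis using int_powers_spanI by metis
qed

lemma int_powers_span_of_int_mult:
  assumes "z \<in> int_powers_span \<eta> M"
  shows "of_int k * z \<in> int_powers_span \<eta> M"
proof -
  obtain c where "z = (\<Sum>r<M. of_int (c r) * \<eta>^r)"
    using assms by (metis int_powers_spanE)
  then have "of_int k * z = (\<Sum>r<M. of_int (k * c r) * \<eta>^r)"
    by (simp add: sum_distrib_left mult.assoc)
  then show ?thesis using int_powers_spanI by metis
qed

lemma int_powers_span_diff:
  assumes "z \<in> int_powers_span \<eta> M" "w \<in> int_powers_span \<eta> M"
  shows "z - w \<in> int_powers_span \<eta> M"
  using int_powers_span_add[OF assms(1) int_powers_span_of_int_mult[OF assms(2), of "-1"]]
  by simp

lemma int_powers_span_of_int:
  assumes "M > 0"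
  shows "of_int k \<in> int_powers_span \<eta> M"
proof -
  have "(\<Sum>r<M. of_int (if r = 0 then k else 0) * \<eta>^r) = (\<Sum>r<M. if r = 0 then of_int k else 0)"
    by (rule sum.cong) auto
  also have "\<dots> = of_int k" using assms by simp
  finally show ?thesis using int_powers_spanI by metis
qed

text \<open>With \<open>\<eta>^M = -1\<close> the span is the ring \<open>\<int>[\<eta>]\<close>: multiplying by \<open>\<eta>\<close> shifts the
  coefficients cyclically, negating the one that wraps around.\<close>

lemma int_powers_span_root_mult:
  assumes root: "\<eta>^M = -1" and z: "z \<in> int_powers_span \<eta> M"
  shows "\<eta> * z \<in> int_powers_span \<eta> M"
proof (cases M)
  case 0
  then show ?thesis using z by (auto simp: int_powers_span_def)
next
  case (Suc M')
  obtain c where c: "z = (\<Sum>r<M. of_int (c r) * \<eta>^r)"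
    using z by (metis int_powers_spanE)
  define c' where "c' r = (if r = 0 then - c M' else c (r - 1))" for r
  have "\<eta> * z = (\<Sum>r<M'. of_int (c r) * \<eta>^Suc r) + of_int (c M') * \<eta>^M"
    using Suc c by (simp add: sum_distrib_left algebra_simps)
  also have "\<dots> = (\<Sum>r<M'. of_int (c' (Suc r)) * \<eta>^Suc r) + of_int (c' 0) * \<eta>^0"
    using root by (simp add: c'_def)
  also have "\<dots> = (\<Sum>r<M. of_int (c' r) * \<eta>^r)"
    unfolding Suc sum.lessThan_Suc_shift by simp
  finally show ?thesis using int_powers_spanI by metis
qed

lemma int_powers_span_root_power_mult:
  assumes "\<eta>^M = -1" "z \<in> int_powers_span \<eta> M"
  shows "\<eta>^k * z \<in> int_powers_span \<eta> M"
  by (induction k) (use assms int_powers_span_root_mult in \<open>auto simp: mult.assoc\<close>)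

lemma int_powers_span_root_power:
  assumes "\<eta>^M = -1" "M > 0"
  shows "\<eta>^k \<in> int_powers_span \<eta> M"
  using int_powers_span_root_power_mult[OF assms(1) int_powers_span_of_int[OF assms(2), of 1]]
  by simp

lemma int_powers_span_mult:
  assumes root: "\<eta>^M = -1" and z: "z \<in> int_powers_span \<eta> M" and w: "w \<in> int_powers_span \<eta> M"
  shows "w * z \<in> int_powers_span \<eta> M"
proof -
  obtain c where c: "w = (\<Sum>r<M. of_int (c r) * \<eta>^r)"
    using w by (metis int_powers_spanE)
  have "(\<Sum>r<K. of_int (c r) * (\<eta>^r * z)) \<in> int_powers_span \<eta> M" for K
  proof (induction K)
    case 0
    then show ?case using int_powers_spanI[where c="\<lambda>_. 0"] by simp
  next
    case (Suc K)
    then show ?case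
      by (simp add: int_powers_span_add int_powers_span_of_int_mult
          int_powers_span_root_power_mult root z)
  qed
  then show ?thesis
    using c by (simp add: sum_distrib_right mult.assoc)
qed

lemma int_powers_span_power:
  assumes "\<eta>^M = -1" "M > 0" "z \<in> int_powers_span \<eta> M"
  shows "z^k \<in> int_powers_span \<eta> M"
  by (induction k)
    (use int_powers_span_of_int[OF assms(2), of 1] int_powers_span_mult[OF assms(1)] assms(3)
      in \<open>auto simp: mult.commute\<close>)

text \<open>If \<open>2 h = 1\<close> with \<open>h \<in> \<int>[\<eta>]\<close>, writing
  \<open>h \<eta>^i = \<Sum>\<^sub>r C\<^sub>i\<^sub>r \<eta>^r\<close> makes \<open>(\<eta>^r)\<^sub>r\<close> a kernel vector of the integer matrix \<open>2C - 1\<close>,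
  whose determinant is odd.\<close>

lemma two_mult_neq_one_in_int_powers_span:
  fixes \<eta> :: "'a::{idom,ring_char_0}"
  assumes root: "\<eta>^M = -1" and M: "M > 0" and h: "h \<in> int_powers_span \<eta> M"
  shows "2 * h \<noteq> 1"
proof
  assume h2: "2 * h = 1"
  have "\<forall>i<M. \<exists>c. h * \<eta>^i = (\<Sum>r<M. of_int (c r) * \<eta>^r)"
    using int_powers_span_mult[OF root int_powers_span_root_power[OF root M] h]
    by (metis int_powers_spanE mult.commute)
  then obtain C where C: "\<And>i. i < M \<Longrightarrow> h * \<eta>^i = (\<Sum>r<M. of_int (C i r) * \<eta>^r)"
    by metis
  define B :: "int mat" where "B = mat M M (\<lambda>(i,j). 2 * C i j - (if i = j then 1 else 0))"
  define v :: "'a vec" where "v = vec M (\<lambda>j. \<eta>^j)"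
  have B: "map_mat of_int B \<in> carrier_mat M M" unfolding B_def by simp
  have v: "v \<in> carrier_vec M" "v \<noteq> 0\<^sub>v M"
    using M by (auto simp: v_def vec_eq_iff)
  have "map_mat of_int B *\<^sub>v v = 0\<^sub>v M"
  proof (rule eq_vecI)
    fix i assume "i < dim_vec (0\<^sub>v M :: 'a vec)"
    then have i: "i < M" by simp
    have "(map_mat of_int B *\<^sub>v v) $ i
        = (\<Sum>j<M. 2 * (of_int (C i j) * \<eta>^j) - (if i = j then \<eta>^j else 0))"
      using i by (auto simp: B_def v_def scalar_prod_def atLeast0LessThan algebra_simps
          intro!: sum.cong)
    also have "\<dots> = 2 * (h * \<eta>^i) - \<eta>^i"
      using i C[OF i] by (simp add: sum_subtractf sum_distrib_left sum.delta)
    also have "\<dots> = 0" using h2 by (simp add: mult.assoc[symmetric])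
    finally show "(map_mat of_int B *\<^sub>v v) $ i = 0\<^sub>v M $ i" using i by simp
  qed (use B in simp)
  then have "det (map_mat (of_int :: int \<Rightarrow> 'a) B) = 0"
    using det_0_iff_vec_prod_zero[OF B] v by blast
  then have "det B = 0" by simp
  moreover have "map_mat (of_int :: int \<Rightarrow> bit) B = 1\<^sub>m M"
    by (rule eq_matI) (auto simp: B_def)
  then have "(of_int (det B) :: bit) = 1"
    by (metis det_one of_int_hom.hom_det)
  ultimately show False by simp
qed

lemma one_minus_power_two_power_mod_two:
  assumes root: "\<eta>^M = -1" and M: "M > 0"
  shows "\<exists>B\<in>int_powers_span \<eta> M. (1 - \<eta>)^(2^k) = 1 - \<eta>^(2^k) + 2 * B"
proof (induction k)
  case 0
  show ?case
    by (rule bexI[of _ 0]) (use int_powers_span_of_int[OF M, of 0] in auto)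
next
  case (Suc k)
  then obtain B where B: "B \<in> int_powers_span \<eta> M" "(1 - \<eta>)^(2^k) = 1 - \<eta>^(2^k) + 2 * B"
    by blast
  define z where "z = \<eta>^(2^k)"
  have z: "z \<in> int_powers_span \<eta> M"
    unfolding z_def by (rule int_powers_span_root_power[OF root M])
  define B' where "B' = z * z - z + 2 * (B * (1 - z)) + 2 * (B * B)"
  have "B' \<in> int_powers_span \<eta> M"
    unfolding B'_def mult_2
    by (intro int_powers_span_add int_powers_span_diff int_powers_span_mult[OF root]
        int_powers_span_of_int[OF M, of 1, simplified] z B(1))
  moreover have "(1 - \<eta>)^(2^Suc k) = 1 - \<eta>^(2^Suc k) + 2 * B'"
  proof -
    have "(1 - \<eta>)^(2^Suc k) = ((1 - \<eta>)^(2^k))^2"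
      by (simp add: power_mult[symmetric] mult.commute)
    moreover have "\<eta>^(2^Suc k) = z * z"
      unfolding z_def by (simp add: power_add[symmetric] mult_2)
    ultimately show ?thesis
      unfolding B(2) B'_def z_def[symmetric] by (simp add: power2_eq_square algebra_simps)
  qed
  ultimately show ?case by blast
qed

text \<open>The 2-adic core: an odd-coefficient relation would give \<open>\<Sum>\<^sub>r \<eta>^r \<in> 2\<int>[\<eta>]\<close>, hence
  \<open>1 - \<eta>\<close> would divide \<open>1\<close> in \<open>\<int>[\<eta>]\<close> (as \<open>(1 - \<eta>) \<Sum>\<^sub>r \<eta>^r = 2\<close>); but \<open>(1 - \<eta>)^M\<close> is
  divisible by \<open>2\<close>, so \<open>1/2\<close> would lie in \<open>\<int>[\<eta>]\<close>.\<close>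

lemma sum_odd_coeffs_powers_neq_zero:
  fixes \<eta> :: "'a::{idom,ring_char_0}" and c :: "nat \<Rightarrow> int"
  assumes root: "\<eta>^M = -1" and M: "M = 2^m" and odd: "\<And>r. r < M \<Longrightarrow> odd (c r)"
  shows "(\<Sum>r<M. of_int (c r) * \<eta>^r) \<noteq> 0"
proof
  assume rel: "(\<Sum>r<M. of_int (c r) * \<eta>^r) = 0"
  have M0: "M > 0" using M by simp
  define u where "u = (\<Sum>r<M. of_int (- ((c r - 1) div 2)) * \<eta>^r)"
  have u: "u \<in> int_powers_span \<eta> M"
    unfolding u_def by (rule int_powers_spanI)
  have "(\<Sum>r<M. of_int (c r) * \<eta>^r) = (\<Sum>r<M. \<eta>^r - 2 * (of_int (- ((c r - 1) div 2)) * \<eta>^r))"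
    by (rule sum.cong) (auto elim!: oddE[OF odd] simp: algebra_simps)
  also have "\<dots> = (\<Sum>r<M. \<eta>^r) - 2 * u"
    by (simp only: sum_subtractf u_def sum_distrib_left)
  finally have sum_powers: "(\<Sum>r<M. \<eta>^r) = 2 * u"
    using rel by simp
  have "(1 - \<eta>) * (\<Sum>r<M. \<eta>^r) = 2"
    using one_diff_power_eq[of \<eta> M] root by simp
  then have "2 * ((1 - \<eta>) * u) = 2 * 1"
    unfolding sum_powers by (simp add: algebra_simps)
  then have unit: "(1 - \<eta>) * u = 1" by simp
  obtain B where B: "B \<in> int_powers_span \<eta> M" "(1 - \<eta>)^M = 1 - \<eta>^M + 2 * B"
    using one_minus_power_two_power_mod_two[OF root M0, of m] M by blast
  have "1 = ((1 - \<eta>) * u)^M" using unit by simp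
  also have "\<dots> = (1 - \<eta>)^M * u^M" by (simp add: power_mult_distrib)
  also have "\<dots> = 2 * ((1 + B) * u^M)"
    using B(2) root by (simp add: algebra_simps)
  finally have "2 * ((1 + B) * u^M) = 1" by simp
  moreover have "(1 + B) * u^M \<in> int_powers_span \<eta> M"
    using int_powers_span_of_int[OF M0, of 1]
    by (intro int_powers_span_mult[OF root] int_powers_span_power[OF root M0 u]
        int_powers_span_add B(1)) simp
  ultimately show False using two_mult_neq_one_in_int_powers_span[OF root M0] by blast
qed

lemma sum_lessThan_mult_blocks:
  fixes g :: "nat \<Rightarrow> 'a::comm_monoid_add"
  shows "(\<Sum>k<Q * M. g k) = (\<Sum>q<Q. \<Sum>r<M. g (r + M * q))"
proof -
  have "(\<Sum>k<Q * M. g k) = (\<Sum>q<Q. \<Sum>k\<in>{q * M..<q * M + M}. g k)"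
    by (rule sum.nat_group[symmetric])
  also have "\<dots> = (\<Sum>q<Q. \<Sum>r<M. g (r + M * q))"
    using sum.atLeastLessThan_shift_0[of g "q * M" "q * M + M" for q]
    by (simp add: atLeast0LessThan algebra_simps)
  finally show ?thesis .
qed

lemma sum_alternating_arith:
  "(\<Sum>q<2 * P. (-1::int)^q * (int r + int M * int q)) = - int M * int P"
  by (induction P) (simp_all add: algebra_simps)

text \<open>Grouping \<open>k = r + M q\<close> and using \<open>\<zeta>^(r + M q) = (-1)^q \<zeta>^r\<close>, the coefficient of
  \<open>\<zeta>^r\<close> becomes \<open>-M P\<close> times an odd integer.\<close>

lemma sum_index_residues_powers_neq_zero:
  fixes \<zeta> :: "'a::{idom,ring_char_0}" and m :: "nat \<Rightarrow> int"
  assumes root: "\<zeta>^M = -1" and M: "M = 2^e" and P: "P > 0" and n: "n = M * (2 * P)"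
  shows "(\<Sum>k<n. of_int (int k - int n * m k) * \<zeta>^k) \<noteq> 0"
proof
  assume sum0: "(\<Sum>k<n. of_int (int k - int n * m k) * \<zeta>^k) = 0"
  define c where "c r = 1 + 2 * (\<Sum>q<2 * P. (-1::int)^q * m (r + M * q))" for r
  have n_blocks: "{..<n} = {..<2 * P * M}"
    using n by (simp add: mult.commute)
  have power_block: "\<zeta>^(r + M * q) = (-1)^q * \<zeta>^r" for r q
    by (simp add: power_add power_mult root)
  have coeff: "(\<Sum>q<2 * P. (-1)^q * (int (r + M * q) - int n * m (r + M * q)))
      = - (int M * int P) * c r" for r
  proof -
    have "(\<Sum>q<2 * P. (-1)^q * (int (r + M * q) - int n * m (r + M * q)))
        = (\<Sum>q<2 * P. (-1::int)^q * (int r + int M * int q))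
          - int n * (\<Sum>q<2 * P. (-1)^q * m (r + M * q))"
      by (simp add: sum_subtractf sum_distrib_left algebra_simps)
    then show ?thesis
      unfolding sum_alternating_arith c_def n by (simp add: algebra_simps)
  qed
  have "(\<Sum>k<n. of_int (int k - int n * m k) * \<zeta>^k)
      = (\<Sum>q<2 * P. \<Sum>r<M. of_int (int (r + M * q) - int n * m (r + M * q)) * \<zeta>^(r + M * q))"
    unfolding n_blocks by (rule sum_lessThan_mult_blocks)
  also have "\<dots> = (\<Sum>r<M. \<Sum>q<2 * P.
      of_int ((-1)^q * (int (r + M * q) - int n * m (r + M * q))) * \<zeta>^r)"
    by (subst sum.swap) (auto intro!: sum.cong simp: power_block)
  also have "\<dots> = - of_int (int M * int P) * (\<Sum>r<M. of_int (c r) * \<zeta>^r)"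
  proof -
    have "(\<Sum>q<2 * P. of_int ((-1)^q * (int (r + M * q) - int n * m (r + M * q))) * \<zeta>^r)
        = of_int (- (int M * int P) * c r) * \<zeta>^r" for r
      by (simp only: of_int_sum[symmetric] sum_distrib_right[symmetric] coeff)
    then show ?thesis by (simp add: sum_distrib_left algebra_simps)
  qed
  finally have "(\<Sum>r<M. of_int (c r) * \<zeta>^r) = 0"
    using sum0 P M by simp
  moreover have "odd (c r)" for r
    unfolding c_def by simp
  ultimately show False
    using sum_odd_coeffs_powers_neq_zero[OF root M] by blast
qed

definition unit_root :: "nat \<Rightarrow> int \<Rightarrow> complex" where
  "unit_root n x = exp (2 * of_real pi * \<i> * of_int x / of_nat n)"

lemma unit_root_add: "unit_root n (x + y) = unit_root n x * unit_root n y"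
  unfolding unit_root_def by (simp add: exp_add[symmetric] add_divide_distrib algebra_simps)

lemma unit_root_diff: "unit_root n (x - y) = unit_root n x * unit_root n (- y)"
  using unit_root_add[of n x "- y"] by simp

lemma unit_root_0 [simp]: "unit_root n 0 = 1"
  unfolding unit_root_def by simp

lemma unit_root_power: "unit_root n x ^ k = unit_root n (int k * x)"
  unfolding unit_root_def by (simp add: exp_of_nat_mult[symmetric] algebra_simps)

lemma cnj_unit_root: "cnj (unit_root n x) = unit_root n (- x)"
  unfolding unit_root_def exp_cnj by simp

lemma norm_unit_root [simp]: "cmod (unit_root n x) = 1"
  unfolding unit_root_def norm_exp_eq_Re by simp

lemma unit_root_eq_1_iff:
  assumes "n > 0"
  shows "unit_root n x = 1 \<longleftrightarrow> int n dvd x"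
proof
  assume "unit_root n x = 1"
  then obtain m :: int where "2 * pi * of_int x / of_nat n = of_int (2 * m) * pi"
    unfolding unit_root_def exp_eq_1 by auto
  then have "(of_int x :: real) = of_int (int n * m)"
    using assms by (simp add: field_simps)
  then have "x = int n * m"
    by (simp only: of_int_eq_iff)
  then show "int n dvd x" by simp
next
  assume "int n dvd x"
  then obtain t where "x = int n * t" by blast
  then show "unit_root n x = 1"
    unfolding unit_root_def exp_eq_1 using assms by (auto intro!: exI[of _ t] simp: field_simps)
qed

lemma unit_root_cong:
  assumes "n > 0" "x mod int n = y mod int n"
  shows "unit_root n x = unit_root n y"
proof -
  have "unit_root n (x - y) = 1"
    using assms by (simp add: unit_root_eq_1_iff mod_eq_dvd_iff)
  then show ?thesis
    using unit_root_add[of n "x - y" y] by simp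
qed

lemma unit_root_mult_mod:
  assumes "n > 0"
  shows "unit_root n (k * (x mod int n)) = unit_root n (k * x)"
  by (rule unit_root_cong[OF assms]) (rule mod_mult_right_eq)

lemma sum_unit_root_powers:
  assumes "n > 0"
  shows "(\<Sum>k<n. unit_root n (int k * x)) = (if int n dvd x then of_nat n else 0)"
proof (cases "int n dvd x")
  case True
  then have "unit_root n (int k * x) = 1" for k
    using assms by (simp add: unit_root_eq_1_iff)
  then show ?thesis
    using True by simp
next
  case False
  define q where "q = unit_root n x"
  have "q \<noteq> 1" "q^n = 1"
    using False assms by (simp_all add: q_def unit_root_eq_1_iff unit_root_power)
  moreover have "(1 - q) * (\<Sum>k<n. q^k) = 1 - q^n"
    by (simp add: one_diff_power_eq)
  ultimately show ?thesis
    using False by (simp add: q_def unit_root_power)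
qed

lemma int_dvd_diff_less_iff:
  assumes "p < n" "j < n"
  shows "int n dvd (int j - int p) \<longleftrightarrow> j = p"
  using assms by (auto simp flip: mod_eq_dvd_iff simp: zmod_int)

lemma sum_unit_root_powers_diff:
  assumes "p < n" "j < n"
  shows "(\<Sum>k<n. unit_root n (int k * (int j - int p))) = (if j = p then of_nat n else 0)"
  using assms by (simp add: sum_unit_root_powers int_dvd_diff_less_iff)

definition circ_eigenvalue :: "nat \<Rightarrow> (nat \<Rightarrow> complex) \<Rightarrow> nat \<Rightarrow> complex" where
  "circ_eigenvalue n a k = (\<Sum>p<n. a p * unit_root n (- (int k * int p)))"

lemma circ_mult_fourier_vector:
  assumes n: "n > 0" and j: "j < n"
  shows "(\<Sum>q<n. circ n a j q * unit_root n (- (int k * int q)))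
    = circ_eigenvalue n a k * unit_root n (- (int k * int j))"
proof -
  have "(\<Sum>q<n. circ n a j q * unit_root n (- (int k * int q)))
      = (\<Sum>p<n. a p * unit_root n (- (int k * int ((p + j) mod n))))"
  proof (rule sum.reindex_bij_witness[of _ "\<lambda>p. (p + j) mod n" "\<lambda>q. (q + n - j) mod n"])
    fix p assume "p \<in> {..<n}"
    then show "((p + j) mod n + n - j) mod n = p"
      using j by (simp add: mod_add_left_eq add.assoc flip: Nat.add_diff_assoc)
  next
    fix q assume "q \<in> {..<n}"
    then show q: "((q + n - j) mod n + j) mod n = q"
      using j by (simp add: mod_add_left_eq)
    show "a ((q + n - j) mod n) * unit_root n (- (int k * int (((q + n - j) mod n + j) mod n)))
        = circ n a j q * unit_root n (- (int k * int q))"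
      unfolding q circ_def ..
  qed (use n in simp_all)
  also have "\<dots> = (\<Sum>p<n. a p * (unit_root n (- (int k * int p)) * unit_root n (- (int k * int j))))"
  proof (rule sum.cong[OF refl])
    fix p
    have "unit_root n (- (int k * int ((p + j) mod n))) = unit_root n (- int k * (int p + int j))"
      using unit_root_mult_mod[OF n, of "- int k" "int p + int j"] by (simp add: zmod_int)
    then show "a p * unit_root n (- (int k * int ((p + j) mod n)))
        = a p * (unit_root n (- (int k * int p)) * unit_root n (- (int k * int j)))"
      by (simp add: unit_root_add[symmetric] algebra_simps)
  qed
  finally show ?thesis
    by (simp add: circ_eigenvalue_def sum_distrib_right mult.assoc)
qed

lemma unit_root_mult_diff:
  "unit_root n (int k * (int l - int j)) = unit_root n (int k * int l) * unit_root n (- (int k * int j))"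
  by (simp add: right_diff_distrib unit_root_diff)

lemma mat_pow_circ:
  assumes n: "n > 0" and "j < n" "l < n"
  shows "mat_pow n (circ n a) m j l
    = (\<Sum>k<n. circ_eigenvalue n a k ^ m * unit_root n (int k * (int l - int j))) / of_nat n"
  using assms(2,3)
proof (induction m arbitrary: j)
  case 0
  then show ?case
    using n by (simp add: sum_unit_root_powers_diff)
next
  case (Suc m)
  let ?ev = "circ_eigenvalue n a"
  have "mat_pow n (circ n a) (Suc m) j l
      = (\<Sum>q<n. \<Sum>k<n. circ n a j q * (?ev k ^ m * unit_root n (int k * (int l - int q)))) / of_nat n"
    using Suc by (simp add: mat_mult_def sum_divide_distrib sum_distrib_left)
  also have "\<dots> = (\<Sum>k<n. \<Sum>q<n. ?ev k ^ m * unit_root n (int k * int l)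
      * (circ n a j q * unit_root n (- (int k * int q)))) / of_nat n"
    by (subst sum.swap) (simp add: unit_root_mult_diff mult_ac)
  also have "\<dots> = (\<Sum>k<n. ?ev k ^ m * unit_root n (int k * int l)
      * (\<Sum>q<n. circ n a j q * unit_root n (- (int k * int q)))) / of_nat n"
    by (simp add: sum_distrib_left)
  also have "\<dots> = (\<Sum>k<n. ?ev k ^ Suc m * unit_root n (int k * (int l - int j))) / of_nat n"
    by (simp add: circ_mult_fourier_vector[OF n Suc.prems(1)] unit_root_mult_diff mult_ac)
  finally show ?case .
qed

lemma mat_exp_circ:
  assumes "n > 0" "j < n" "l < n"
  shows "mat_exp n (circ n a) j l
    = (\<Sum>k<n. exp (circ_eigenvalue n a k) * unit_root n (int k * (int l - int j))) / of_nat n"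
proof -
  define c where "c k = unit_root n (int k * (int l - int j)) / of_nat n" for k
  have "(\<lambda>m. \<Sum>k<n. c k * (circ_eigenvalue n a k ^ m /\<^sub>R fact m))
      sums (\<Sum>k<n. c k * exp (circ_eigenvalue n a k))"
    by (intro sums_sum sums_mult exp_converges)
  moreover have "mat_pow n (circ n a) m j l / of_nat (fact m)
      = (\<Sum>k<n. c k * (circ_eigenvalue n a k ^ m /\<^sub>R fact m))" for m
    unfolding mat_pow_circ[OF assms] c_def
    by (simp add: sum_divide_distrib scaleR_conv_of_real divide_inverse sum_distrib_left algebra_simps)
  ultimately show ?thesis
    unfolding mat_exp_def c_def by (simp add: sums_unique[symmetric] sum_divide_distrib algebra_simps)
qed

lemma circ_eigenvalue_mult: "circ_eigenvalue n (\<lambda>p. c * a p) k = c * circ_eigenvalue n a k"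
  unfolding circ_eigenvalue_def by (simp add: sum_distrib_left algebra_simps)

lemma transition_circ:
  assumes "n > 0" "w < n" "v < n"
  shows "transition n (circ n a) t w v
    = (\<Sum>k<n. exp (- (\<i> * of_real t) * circ_eigenvalue n a k) * unit_root n (int k * (int v - int w)))
      / of_nat n"
proof -
  have scaled: "(\<lambda>j k. - (\<i> * of_real t) * circ n a j k) = circ n (\<lambda>p. - (\<i> * of_real t) * a p)"
    by (intro ext) (simp add: circ_def)
  show ?thesis
    unfolding transition_def scaled mat_exp_circ[OF assms] circ_eigenvalue_mult ..
qed

lemma circ_eigenvalue_quadratic_form:
  assumes "n > 0"
  shows "of_nat n * circ_eigenvalue n a k
    = (\<Sum>j<n. \<Sum>q<n. unit_root n (int k * int j) * circ n a j q * unit_root n (- (int k * int q)))"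
proof -
  have cancel: "unit_root n (int k * int j) * (c * unit_root n (- (int k * int j))) = c" for j c
    by (simp add: mult.left_commute flip: unit_root_add)
  show ?thesis
    using assms by (simp add: mult.assoc circ_mult_fourier_vector cancel flip: sum_distrib_left)
qed

lemma circ_eigenvalue_real:
  assumes "n > 0" "hermitian_mat n (circ n a)"
  shows "cnj (circ_eigenvalue n a k) = circ_eigenvalue n a k"
proof -
  have herm: "cnj (circ n a j q) = circ n a q j" if "j < n" "q < n" for j q
    using assms(2) that unfolding hermitian_mat_def by metis
  have "cnj (of_nat n * circ_eigenvalue n a k)
      = (\<Sum>j<n. \<Sum>q<n. unit_root n (- (int k * int j)) * circ n a q j * unit_root n (int k * int q))"
    unfolding circ_eigenvalue_quadratic_form[OF assms(1)]
    by (simp add: cnj_unit_root herm)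
  also have "\<dots> = of_nat n * circ_eigenvalue n a k"
    unfolding circ_eigenvalue_quadratic_form[OF assms(1)]
    by (subst sum.swap) (simp add: mult_ac)
  finally show ?thesis
    using assms(1) by simp
qed

lemma sum_circ_eigenvalue_unit_root:
  assumes "j < n"
  shows "(\<Sum>k<n. circ_eigenvalue n a k * unit_root n (int k * int j)) = of_nat n * a j"
proof -
  have "(\<Sum>k<n. circ_eigenvalue n a k * unit_root n (int k * int j))
      = (\<Sum>p<n. a p * (\<Sum>k<n. unit_root n (int k * (int j - int p))))"
    unfolding circ_eigenvalue_def sum_distrib_left sum_distrib_right
    by (subst sum.swap) (simp add: unit_root_mult_diff mult_ac)
  also have "\<dots> = of_nat n * a j"
    using assms by (simp add: sum_unit_root_powers_diff if_distrib cong: if_cong)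
  finally show ?thesis .
qed

lemma unimodular_eq_mean:
  fixes z :: "nat \<Rightarrow> complex"
  assumes n: "n > 0" and unimodular: "\<And>k. k < n \<Longrightarrow> cmod (z k) = 1"
    and mean: "cmod ((\<Sum>k<n. z k) / of_nat n) = 1" and k: "k < n"
  shows "z k = (\<Sum>k<n. z k) / of_nat n"
proof -
  define c where "c = (\<Sum>k<n. z k) / of_nat n"
  have c: "cmod c = 1" "cnj c * c = 1"
    using mean complex_norm_square[of c] by (simp_all add: c_def mult.commute)
  have le: "Re (cnj c * z i) \<le> 1" if "i < n" for i
    using complex_Re_le_cmod[of "cnj c * z i"] unimodular[OF that] c by (simp add: norm_mult)
  have "(\<Sum>i<n. Re (cnj c * z i)) = Re (cnj c * (\<Sum>i<n. z i))"
    by (simp only: sum_distrib_left Re_sum)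
  also have "(\<Sum>i<n. z i) = of_nat n * c"
    using n by (simp add: c_def)
  also have "cnj c * (of_nat n * c) = of_nat n"
    using c(2) by (metis mult.left_commute mult.right_neutral)
  also have "Re (of_nat n) = (\<Sum>i<n. 1::real)"
    by simp
  finally have "Re (cnj c * z k) = 1"
    by (rule sum_mono_inv) (use le k in auto)
  moreover have "cmod (cnj c * z k) = 1"
    using unimodular[OF k] c by (simp add: norm_mult)
  ultimately have "Im (cnj c * z k) = 0"
    using cmod_power2[of "cnj c * z k"] by simp
  with \<open>Re (cnj c * z k) = 1\<close> have "cnj c * z k = 1"
    by (simp add: complex_eq_iff)
  then show ?thesis
    using c(2) unfolding c_def[symmetric] by (metis mult.assoc mult.commute mult_1)
qed

lemma circ_eigenvalue_Im:
  assumes "n > 0" "hermitian_mat n (circ n a)"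
  shows "Im (circ_eigenvalue n a k) = 0"
  using circ_eigenvalue_real[OF assms, of k] by (simp add: complex_eq_iff)

lemma pst_circ_eigenvalue_gaps:
  assumes n: "1 < n" and herm: "hermitian_mat n (circ n a)" and t: "t > 0"
    and pst: "cmod (transition n (circ n a) t 0 1) = 1"
  obtains m :: "nat \<Rightarrow> int" where "\<And>k. k < n \<Longrightarrow> circ_eigenvalue n a k
    = circ_eigenvalue n a 0 + of_real (2 * pi / (t * real n)) * of_int (int k - int n * m k)"
proof -
  let ?ev = "circ_eigenvalue n a"
  define z where "z k = exp (- (\<i> * of_real t) * ?ev k) * unit_root n (int k)" for k
  have mean: "transition n (circ n a) t 0 1 = (\<Sum>k<n. z k) / of_nat n"
    using transition_circ[of n 0 1] n by (simp add: z_def)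
  have n0: "n > 0" using n by simp
  have unimodular: "cmod (z k) = 1" for k
    using circ_eigenvalue_Im[OF n0 herm, of k] by (simp add: z_def norm_mult norm_exp_eq_Re)
  have "z k = (\<Sum>k<n. z k) / of_nat n" if "k < n" for k
    by (rule unimodular_eq_mean[OF n0 unimodular]) (use pst mean that in simp_all)
  then have z_eq: "z k = z 0" if "k < n" for k
    using that n0 by metis
  have "\<exists>m::int. ?ev k = ?ev 0 + of_real (2 * pi / (t * real n)) * of_int (int k - int n * m)"
    if k: "k < n" for k
  proof -
    have "exp (- (\<i> * of_real t) * ?ev k + 2 * of_real pi * \<i> * of_int (int k) / of_nat n)
        = exp (- (\<i> * of_real t) * ?ev 0)"
      using z_eq[OF k] unfolding z_def unit_root_def exp_add by simp
    then obtain m :: int where "- (\<i> * of_real t) * ?ev k + 2 * of_real pi * \<i> * of_int (int k) / of_nat n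
        = - (\<i> * of_real t) * ?ev 0 + of_real (of_int (2 * m) * pi) * \<i>"
      unfolding exp_eq by blast
    then have "\<i> * (of_real t * (?ev k - ?ev 0))
        = \<i> * (2 * of_real pi * of_int (int k) / of_nat n - of_real (of_int (2 * m) * pi))"
      by (simp add: algebra_simps)
    then have "of_real t * (?ev k - ?ev 0)
        = 2 * of_real pi * of_int (int k) / of_nat n - of_real (of_int (2 * m) * pi)"
      by simp
    then have "?ev k = ?ev 0 + of_real (2 * pi / (t * real n)) * of_int (int k - int n * m)"
      using t n by (simp add: field_simps)
    then show ?thesis ..
  qed
  then obtain m where "\<And>k. k < n \<Longrightarrow> ?ev k = ?ev 0 + of_real (2 * pi / (t * real n)) * of_int (int k - int n * m k)"
    by metis
  then show ?thesis by (rule that)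
qed

lemma gap_sum_eq_zero_if_circ_coeff_zero:
  assumes j: "0 < j" "j < n" and \<kappa>: "\<kappa> \<noteq> 0"
    and gaps: "\<And>k. k < n \<Longrightarrow> circ_eigenvalue n a k = circ_eigenvalue n a 0 + \<kappa> * of_int (g k)"
    and "a j = 0"
  shows "(\<Sum>k<n. of_int (g k) * unit_root n (int j) ^ k) = 0"
proof -
  have "(\<Sum>k<n. unit_root n (int k * int j)) = 0"
    using sum_unit_root_powers_diff[of 0 n j] j by simp
  moreover have "0 = (\<Sum>k<n. circ_eigenvalue n a k * unit_root n (int k * int j))"
    using sum_circ_eigenvalue_unit_root[OF j(2)] \<open>a j = 0\<close> by simp
  moreover obtain c where "\<And>k. k < n \<Longrightarrow> circ_eigenvalue n a k = c + \<kappa> * of_int (g k)"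
    using gaps by blast
  ultimately have "\<kappa> * (\<Sum>k<n. of_int (g k) * unit_root n (int k * int j)) = 0"
    by (simp add: distrib_right sum.distrib mult.assoc flip: sum_distrib_left)
  then show ?thesis
    using \<kappa> by (simp add: unit_root_power mult.commute)
qed

lemma odd_part_decomposition:
  assumes "j > (0::nat)"
  obtains e j' where "j = 2^e * j'" "odd j'"
proof -
  have "j \<noteq> 0" "\<not> is_unit (2::nat)"
    using assms by simp_all
  then obtain y where "j = 2 ^ multiplicity 2 j * y" "\<not> 2 dvd y"
    by (rule multiplicity_decompose')
  then show thesis
    by (rule that)
qed

lemma unit_root_half: "unit_root (2 * h) (int h * int x) = (-1)^x" if "h > 0"
proof -
  have "2 * of_real pi * \<i> * of_int (int h * int x) / of_nat (2 * h) = of_nat x * (of_real pi * \<i>)"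
    using that by (simp add: field_simps)
  then have "unit_root (2 * h) (int h * int x) = exp (of_real pi * \<i>) ^ x"
    unfolding unit_root_def by (simp only: exp_of_nat_mult)
  then show ?thesis by simp
qed

lemma unit_root_two_power_block:
  assumes n: "n = 2^d" and j: "0 < j" "j < n"
  obtains M P e where "unit_root n (int j) ^ M = -1" "M = 2^e" "P > 0" "n = M * (2 * P)"
proof -
  obtain f j' where j': "j = 2^f * j'" "odd j'"
    using odd_part_decomposition[OF j(1)] .
  have "2^f \<le> j"
    using j' by (cases j') auto
  then have "(2::nat)^f < 2^d"
    using j(2) n by linarith
  then have "f < d" by simp
  define M where "M = (2::nat)^(d - f - 1)"
  have n_eq: "n = M * (2 * 2^f)" and n_half: "n = 2 * 2^(d - 1)" and Mj: "M * j = 2^(d - 1) * j'"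
    using \<open>f < d\<close> unfolding n M_def j'(1) by (simp_all add: mult.assoc flip: power_add power_Suc)
  have "unit_root n (int j) ^ M = unit_root n (int (M * j))"
    by (simp add: unit_root_power)
  also have "\<dots> = unit_root (2 * 2^(d - 1)) (int (2^(d - 1)) * int j')"
    unfolding Mj n_half by simp
  also have "\<dots> = -1"
    using unit_root_half[of "2^(d - 1)" j'] j'(2) by simp
  finally show ?thesis
    by (rule that[OF _ M_def _ n_eq]) simp
qed

theorem lemma8:
  fixes d n :: nat and a :: "nat \<Rightarrow> complex"
  assumes "d \<ge> 1"
    and "n = 2 ^ d"
    and "hermitian_mat n (circ n a)"
    and "universal_pst n (circ n a)"
  shows "\<forall>j. 1 \<le> j \<and> j \<le> n - 1 \<longrightarrow> a j \<noteq> 0"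
proof (intro allI impI notI)
  fix j assume "1 \<le> j \<and> j \<le> n - 1" "a j = 0"
  have "n \<ge> 2"
    using assms(1,2) power_increasing[of 1 d "2::nat"] by simp
  then have j: "0 < j" "j < n" and n: "1 < n"
    using \<open>1 \<le> j \<and> j \<le> n - 1\<close> by auto
  obtain t where t: "t > 0" "cmod (transition n (circ n a) t 0 1) = 1"
    using assms(4)[unfolded universal_pst_def, rule_format, of 1 0] n by auto
  obtain m where gaps: "\<And>k. k < n \<Longrightarrow> circ_eigenvalue n a k
      = circ_eigenvalue n a 0 + of_real (2 * pi / (t * real n)) * of_int (int k - int n * m k)"
    using pst_circ_eigenvalue_gaps[OF n assms(3) t] by blast
  have sum0: "(\<Sum>k<n. of_int (int k - int n * m k) * unit_root n (int j) ^ k) = 0"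
    by (rule gap_sum_eq_zero_if_circ_coeff_zero[OF j _ gaps \<open>a j = 0\<close>]) (use t(1) n in simp)
  obtain M P e where "unit_root n (int j) ^ M = -1" "M = 2^e" "P > 0" "n = M * (2 * P)"
    using unit_root_two_power_block[OF assms(2) j] .
  from sum_index_residues_powers_neq_zero[OF this] sum0 show False
    by contradiction
qed

end
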